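(* Consider a star graph on $m$ nodes (one hub adjacent to all other nodes, no other edges) and an SIS infection (without external infection) with infection rate $\beta=\Omega(m^{\epsilon-1})$ for some constant $\epsilon>0$ and recovery rate $1$. Suppose only the hub is infected at time $t=0$. Then at the time when the first node recovery occurs, the number of infected nodes is $\Omega(m^{\epsilon/3})$ with probability at least $1-O\left(m^{-\epsilon/3}\right)$.
   Context: In the SIS infection, each node is susceptible or infected; a susceptible node becomes infected at rate $\beta$ times its number of infected neighbors, and each infected node recovers (becomes susceptible) at rate $1$. *)

theory Defs
  imports "HOL-Probability.Probability"
begin

text \<open>A state is the set S of infected nodes. A susceptible node v gets infected at rate
  beta times its number of infected neighbours; an infected node recovers at rate 1.
  Events: Inl v = infection of v, Inr u = recovery of u.  The embedded jump chain of
  the continuous-time Markov chain picks the next event with probability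
  (rate of event) / (total rate).\<close>

definition infection_rate :: "(nat \<Rightarrow> nat \<Rightarrow> bool) \<Rightarrow> nat \<Rightarrow> real \<Rightarrow> nat set \<Rightarrow> nat \<Rightarrow> real" where
  "infection_rate adj m \<beta> S v =
     (if v < m \<and> v \<notin> S then \<beta> * real (card {u \<in> S. adj u v}) else 0)"

definition recovery_rate :: "nat set \<Rightarrow> nat \<Rightarrow> real" where
  "recovery_rate S u = (if u \<in> S then 1 else 0)"

definition total_rate :: "(nat \<Rightarrow> nat \<Rightarrow> bool) \<Rightarrow> nat \<Rightarrow> real \<Rightarrow> nat set \<Rightarrow> real" where
  "total_rate adj m \<beta> S =
     (\<Sum>v<m. infection_rate adj m \<beta> S v) + (\<Sum>u<m. recovery_rate S u)"

definition sis_next_event :: "(nat \<Rightarrow> nat \<Rightarrow> bool) \<Rightarrow> nat \<Rightarrow> real \<Rightarrow> nat set \<Rightarrow> (nat + nat) pmf" where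
  "sis_next_event adj m \<beta> S =
     embed_pmf (\<lambda>e. case e of
        Inl v \<Rightarrow> infection_rate adj m \<beta> S v / total_rate adj m \<beta> S
      | Inr u \<Rightarrow> recovery_rate S u / total_rate adj m \<beta> S)"

text \<open>Number of infected nodes at the moment the first recovery occurs (counted just
  before that recovery), running the jump chain from infected set S for at most
  n further infection events (with n = m this bound is never reached, since at most
  m infections can happen before every node is infected).\<close>
primrec sis_first_recovery ::
  "(nat \<Rightarrow> nat \<Rightarrow> bool) \<Rightarrow> nat \<Rightarrow> real \<Rightarrow> nat \<Rightarrow> nat set \<Rightarrow> nat pmf" where
  "sis_first_recovery adj m \<beta> 0 S = return_pmf (card S)"
| "sis_first_recovery adj m \<beta> (Suc n) S =
     bind_pmf (sis_next_event adj m \<beta> S)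
       (\<lambda>e. case e of
          Inl v \<Rightarrow> sis_first_recovery adj m \<beta> n (insert v S)
        | Inr u \<Rightarrow> return_pmf (card S))"

definition star_adj :: "nat \<Rightarrow> nat \<Rightarrow> bool" where
  "star_adj u v \<longleftrightarrow> u \<noteq> v \<and> (u = 0 \<or> v = 0)"

definition star_first_recovery :: "nat \<Rightarrow> real \<Rightarrow> nat pmf" where
  "star_first_recovery m \<beta> = sis_first_recovery star_adj m \<beta> m {0}"

end

theory Submission
  imports Defs "HOL-Real_Asymp.Real_Asymp"
begin

text \<open>Until the first recovery the chain only adds infected nodes. On the star every susceptible
  node is a neighbour of the infected hub, so with i infected nodes the next event is a recovery
  with probability at most i / (\<beta> (m - i)). Summing these failure probabilities up to
  K \<approx> m powr (\<epsilon>/3) gives O(K^2 / (\<beta> m)) = O(m powr (-\<epsilon>/3)).\<close>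

lemma measure_bind_pmf:
  "measure_pmf.prob (bind_pmf M N) X = (\<integral>x. measure_pmf.prob (N x) X \<partial>measure_pmf M)"
  unfolding measure_pmf_bind
  by (rule measure_pmf.measure_bind[where N="count_space UNIV"])
     (auto simp: measurable_pmf_measure2 space_subprob_algebra measure_pmf.subprob_space_axioms)

lemma measure_bind_pmf_ge:
  assumes M: "measure_pmf.prob M G \<ge> 1 - q"
    and N: "\<And>x. x \<in> G \<Longrightarrow> measure_pmf.prob (N x) A \<ge> 1 - t"
    and "0 \<le> q" "0 \<le> t"
  shows "measure_pmf.prob (bind_pmf M N) A \<ge> 1 - q - t"
proof (cases "t \<le> 1")
  case True
  define g where "g = (\<lambda>x. measure_pmf.prob (N x) A)"
  have g_ge: "(1 - t) * indicator G x \<le> g x" for x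
    using N[of x] by (cases "x \<in> G") (auto simp: g_def)
  have "(1 - t) * measure_pmf.prob M G = (\<integral>x. (1 - t) * indicator G x \<partial>measure_pmf M)"
    by simp
  also have "\<dots> \<le> (\<integral>x. g x \<partial>measure_pmf M)"
  proof (rule integral_mono[OF _ _ g_ge])
    show "integrable (measure_pmf M) (\<lambda>x. (1 - t) * indicator G x)"
      by (rule measure_pmf.integrable_const_bound[where B="\<bar>1 - t\<bar>"]) (auto simp: indicator_def)
    show "integrable (measure_pmf M) g"
      by (rule measure_pmf.integrable_const_bound[where B=1]) (auto simp: g_def)
  qed
  also have "\<dots> = measure_pmf.prob (bind_pmf M N) A"
    by (simp add: measure_bind_pmf g_def)
  finally have "(1 - t) * measure_pmf.prob M G \<le> measure_pmf.prob (bind_pmf M N) A" .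
  moreover have "(1 - t) * (1 - q) \<le> (1 - t) * measure_pmf.prob M G"
    using M True by (intro mult_left_mono) auto
  moreover have "1 - q - t \<le> (1 - t) * (1 - q)"
    using assms(3,4) by (simp add: algebra_simps)
  ultimately show ?thesis by linarith
next
  case False
  then show ?thesis using assms(3) measure_nonneg[of "measure_pmf (bind_pmf M N)" A] by linarith
qed

lemma sis_first_recovery_ge_card:
  assumes "finite S" "k \<in> set_pmf (sis_first_recovery adj m \<beta> n S)"
  shows "card S \<le> k"
  using assms
proof (induction n arbitrary: S)
  case 0
  then show ?case by simp
next
  case (Suc n)
  from Suc.prems(2) obtain e :: "nat + nat" where e: "k \<in> set_pmf (case e of
      Inl v \<Rightarrow> sis_first_recovery adj m \<beta> n (insert v S) | Inr u \<Rightarrow> return_pmf (card S))"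
    by auto
  show ?case
  proof (cases e)
    case (Inl v)
    with e Suc have "card (insert v S) \<le> k" by auto
    moreover have "card S \<le> card (insert v S)" using Suc.prems by (simp add: card_mono subset_insertI)
    ultimately show ?thesis by simp
  next
    case Inr
    with e show ?thesis by simp
  qed
qed

lemma sum_recovery_rate:
  assumes "S \<subseteq> {..<m}"
  shows "(\<Sum>u<m. recovery_rate S u) = real (card S)"
proof -
  have "(\<Sum>u<m. recovery_rate S u) = real (card ({..<m} \<inter> S))"
    by (simp add: recovery_rate_def sum.If_cases)
  also have "{..<m} \<inter> S = S" using assms by blast
  finally show ?thesis .
qed

lemma total_rate_pos:
  assumes "\<beta> \<ge> 0" "S \<subseteq> {..<m}" "S \<noteq> {}"
  shows "total_rate adj m \<beta> S > 0"
proof -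
  have "card S > 0" using assms finite_subset by (auto simp: card_gt_0_iff)
  moreover have "(\<Sum>v<m. infection_rate adj m \<beta> S v) \<ge> 0"
    using assms(1) by (intro sum_nonneg) (simp add: infection_rate_def)
  ultimately show ?thesis using assms(2) by (simp add: total_rate_def sum_recovery_rate)
qed

lemma pmf_sis_next_event:
  assumes "\<beta> \<ge> 0" "S \<subseteq> {..<m}" "S \<noteq> {}"
  shows "pmf (sis_next_event adj m \<beta> S) e = (case e of
        Inl v \<Rightarrow> infection_rate adj m \<beta> S v / total_rate adj m \<beta> S
      | Inr u \<Rightarrow> recovery_rate S u / total_rate adj m \<beta> S)"
proof -
  define T where "T = total_rate adj m \<beta> S"
  define f where "f = (\<lambda>e::nat+nat. case e of
      Inl v \<Rightarrow> infection_rate adj m \<beta> S v / T | Inr u \<Rightarrow> recovery_rate S u / T)"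
  have T_pos: "T > 0" unfolding T_def using assms by (rule total_rate_pos)
  have f_nonneg: "0 \<le> f x" for x
    using T_pos assms(1) by (auto simp: f_def infection_rate_def recovery_rate_def split: sum.split)
  let ?E = "Inl ` {..<m} \<union> Inr ` {..<m}"
  have "(\<Sum>x\<in>?E. f x) = (\<Sum>v<m. infection_rate adj m \<beta> S v / T) + (\<Sum>u<m. recovery_rate S u / T)"
    by (subst sum.union_disjoint) (auto simp: sum.reindex f_def)
  also have "\<dots> = 1"
    using T_pos by (simp add: sum_divide_distrib[symmetric] add_divide_distrib[symmetric] T_def total_rate_def)
  finally have sum_one: "(\<Sum>x\<in>?E. f x) = 1" .
  have "(\<integral>\<^sup>+x. ennreal (f x) \<partial>count_space UNIV) = (\<Sum>x\<in>?E. ennreal (f x))"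
    by (rule nn_integral_count_space')
       (auto simp: f_def infection_rate_def recovery_rate_def split: sum.split dest: subsetD[OF assms(2)])
  also have "\<dots> = 1"
    using f_nonneg sum_one by (simp add: sum_ennreal)
  finally have "(\<integral>\<^sup>+x. ennreal (f x) \<partial>count_space UNIV) = 1" .
  then show ?thesis
    unfolding sis_next_event_def T_def[symmetric] f_def[symmetric]
    using pmf_embed_pmf[OF f_nonneg] by (simp add: f_def)
qed

lemma star_infection_rate_ge:
  assumes "finite S" "0 \<in> S" "v < m" "v \<notin> S" "\<beta> \<ge> 0"
  shows "\<beta> \<le> infection_rate star_adj m \<beta> S v"
proof -
  have "v \<noteq> 0" using assms(2,4) by metis
  then have "0 \<in> {u \<in> S. star_adj u v}" using assms(2) by (simp add: star_adj_def)
  then have "card {u \<in> S. star_adj u v} \<ge> 1"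
    using assms(1) by (auto simp: Suc_le_eq card_gt_0_iff)
  then have "\<beta> * 1 \<le> \<beta> * real (card {u \<in> S. star_adj u v})"
    using assms(5) by (intro mult_left_mono) auto
  then show ?thesis using assms by (simp add: infection_rate_def)
qed

lemma star_prob_next_infection:
  assumes \<beta>: "\<beta> > 0" and S: "S \<subseteq> {..<m}" "0 \<in> S" "card S < m"
  shows "measure_pmf.prob (sis_next_event star_adj m \<beta> S) (Inl ` ({..<m} - S))
          \<ge> 1 - real (card S) / (\<beta> * real (m - card S))"
proof -
  have fin: "finite S" using S finite_subset by blast
  have "S \<noteq> {}" using S(2) by blast
  define I where "I = (\<Sum>v\<in>{..<m} - S. infection_rate star_adj m \<beta> S v)"
  have "(\<Sum>v<m. infection_rate star_adj m \<beta> S v) = I"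
    unfolding I_def by (rule sum.mono_neutral_right) (auto simp: infection_rate_def)
  then have T: "total_rate star_adj m \<beta> S = I + real (card S)"
    using S by (simp add: total_rate_def sum_recovery_rate)
  have "(\<Sum>v\<in>{..<m} - S. \<beta>) \<le> I"
    unfolding I_def using fin S \<beta> by (intro sum_mono star_infection_rate_ge) auto
  then have I_ge: "\<beta> * real (m - card S) \<le> I"
    using S fin by (simp add: card_Diff_subset mult.commute)
  have I_pos: "I > 0"
    using I_ge \<beta> S(3) by (smt (verit) of_nat_0_less_iff zero_less_diff mult_pos_pos)
  have "measure_pmf.prob (sis_next_event star_adj m \<beta> S) (Inl ` ({..<m} - S))
      = (\<Sum>v\<in>{..<m} - S. infection_rate star_adj m \<beta> S v / total_rate star_adj m \<beta> S)"
    using pmf_sis_next_event[of \<beta> S m star_adj, OF _ S(1) \<open>S \<noteq> {}\<close>] \<beta>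
    by (subst measure_measure_pmf_finite) (auto simp: sum.reindex intro!: sum.cong)
  also have "\<dots> = 1 - real (card S) / (I + real (card S))"
    using I_pos by (simp add: T I_def[symmetric] sum_divide_distrib[symmetric] field_simps)
  finally have "measure_pmf.prob (sis_next_event star_adj m \<beta> S) (Inl ` ({..<m} - S))
      = 1 - real (card S) / (I + real (card S))" .
  moreover have "real (card S) / (I + real (card S)) \<le> real (card S) / (\<beta> * real (m - card S))"
    using I_ge I_pos \<beta> S(3) by (intro frac_le) auto
  ultimately show ?thesis by (metis diff_left_mono)
qed

lemma star_first_recovery_tail:
  assumes \<beta>: "\<beta> > 0" and "K < m" "S \<subseteq> {..<m}" "0 \<in> S" "K \<le> n + card S"
  shows "measure_pmf.prob (sis_first_recovery star_adj m \<beta> n S) {k. K \<le> k}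
      \<ge> 1 - (\<Sum>j\<in>{card S..<K}. real j) / (\<beta> * real (m - K))"
  using assms(3-)
proof (induction n arbitrary: S)
  case 0
  then show ?case by simp
next
  case (Suc n)
  have fin: "finite S" using Suc.prems finite_subset by blast
  let ?D = "\<beta> * real (m - K)"
  show ?case
  proof (cases "K \<le> card S")
    case True
    have "AE k in sis_first_recovery star_adj m \<beta> (Suc n) S. K \<le> k"
      using sis_first_recovery_ge_card[OF fin] True by (intro AE_pmfI) (meson order_trans)
    then have "measure_pmf.prob (sis_first_recovery star_adj m \<beta> (Suc n) S) {k. K \<le> k} = 1"
      by (simp add: measure_pmf.prob_eq_1 del: sis_first_recovery.simps)
    then show ?thesis using True by simp
  next
    case False
    have D_pos: "?D > 0" using \<beta> \<open>K < m\<close> by simp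
    have "1 - real (card S) / (\<beta> * real (m - card S)) \<ge> 1 - real (card S) / ?D"
      using False \<beta> \<open>K < m\<close> by (intro diff_left_mono frac_le) auto
    then have next_infection: "measure_pmf.prob (sis_next_event star_adj m \<beta> S) (Inl ` ({..<m} - S))
        \<ge> 1 - real (card S) / ?D"
      using star_prob_next_infection[OF \<beta> Suc.prems(1,2)] False \<open>K < m\<close> by linarith
    have "measure_pmf.prob (sis_first_recovery star_adj m \<beta> (Suc n) S) {k. K \<le> k}
        \<ge> 1 - real (card S) / ?D - (\<Sum>j\<in>{Suc (card S)..<K}. real j) / ?D"
      unfolding sis_first_recovery.simps
    proof (rule measure_bind_pmf_ge[OF next_infection])
      fix e assume "e \<in> Inl ` ({..<m} - S)"
      then obtain v where "e = Inl v" "v < m" "v \<notin> S" by auto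
      with Suc.IH[of "insert v S"] Suc.prems fin
      show "measure_pmf.prob (case e of Inl v \<Rightarrow> sis_first_recovery star_adj m \<beta> n (insert v S)
          | Inr u \<Rightarrow> return_pmf (card S)) {k. K \<le> k} \<ge> 1 - (\<Sum>j\<in>{Suc (card S)..<K}. real j) / ?D"
        by simp
    qed (use D_pos in \<open>auto intro!: divide_nonneg_pos sum_nonneg simp del: of_nat_diff\<close>)
    moreover have "(\<Sum>j\<in>{card S..<K}. real j) = real (card S) + (\<Sum>j\<in>{Suc (card S)..<K}. real j)"
      using False by (simp add: sum.atLeast_Suc_lessThan)
    ultimately show ?thesis by (simp add: add_divide_distrib)
  qed
qed

lemma star_first_recovery_ge:
  assumes "\<beta> > 0" "K < m"
  shows "measure_pmf.prob (star_first_recovery m \<beta>) {k. K \<le> k} \<ge> 1 - real K ^ 2 / (\<beta> * real (m - K))"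
proof -
  have "(\<Sum>j\<in>{1..<K}. real j) \<le> (\<Sum>j\<in>{1..<K}. real K)" by (rule sum_mono) simp
  also have "\<dots> \<le> real K ^ 2" by (simp add: power2_eq_square mult_right_mono)
  finally have "(\<Sum>j\<in>{1..<K}. real j) / (\<beta> * real (m - K)) \<le> real K ^ 2 / (\<beta> * real (m - K))"
    using assms by (intro divide_right_mono) auto
  moreover have "measure_pmf.prob (star_first_recovery m \<beta>) {k. K \<le> k}
      \<ge> 1 - (\<Sum>j\<in>{1..<K}. real j) / (\<beta> * real (m - K))"
    using star_first_recovery_tail[OF assms, of "{0}" m] assms(2)
    unfolding star_first_recovery_def by simp
  ultimately show ?thesis by (meson diff_left_mono order_trans)
qed

lemma ceiling_powr_square_ratio_le:
  fixes b c \<epsilon> :: real and m :: nat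
  assumes c: "c > 0" and \<epsilon>: "0 < \<epsilon>" "\<epsilon> < 1" and m: "real m \<ge> 1"
    and b: "b \<ge> c * real m powr (\<epsilon> - 1)" and m_large: "real m powr (1/3) + 1 \<le> real m / 2"
  defines "K \<equiv> nat \<lceil>real m powr (\<epsilon> / 3)\<rceil>"
  shows "K < m" and "real K ^ 2 / (b * real (m - K)) \<le> 8 / c * real m powr (- \<epsilon> / 3)"
proof -
  define x where "x = real m powr (\<epsilon> / 3)"
  have x_ge_1: "x \<ge> 1" unfolding x_def using m \<epsilon> by (simp add: ge_one_powr_ge_zero)
  have "x \<le> real m powr (1/3)" unfolding x_def using m \<epsilon> by (intro powr_mono) auto
  moreover have K_le: "real K \<le> x + 1" unfolding K_def x_def[symmetric] using x_ge_1 by linarith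
  ultimately have "real K + real m / 2 \<le> real m"
    using m_large by linarith
  then show K_less: "K < m" using m by linarith
  then have m_K: "real (m - K) \<ge> real m / 2"
    using \<open>real K + real m / 2 \<le> real m\<close> by (simp add: of_nat_diff)
  have "real K ^ 2 \<le> (2 * x) ^ 2"
    using K_le x_ge_1 by (intro power_mono) auto
  also have "\<dots> = 4 * (real m powr (- \<epsilon> / 3) * real m powr \<epsilon>)"
    unfolding x_def using m by (simp add: power2_eq_square powr_add[symmetric])
  finally have num: "real K ^ 2 \<le> 4 * (real m powr (- \<epsilon> / 3) * real m powr \<epsilon>)" .
  have "c * real m powr \<epsilon> / 2 = c * real m powr (\<epsilon> - 1) * (real m / 2)"
    using m by (simp add: powr_diff)
  also have "\<dots> \<le> b * real (m - K)"
    using b m_K c by (intro mult_mono) (auto intro: order_trans[OF _ b])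
  finally have den: "c * real m powr \<epsilon> / 2 \<le> b * real (m - K)" .
  have "real K ^ 2 / (b * real (m - K)) \<le> 4 * (real m powr (- \<epsilon> / 3) * real m powr \<epsilon>) / (c * real m powr \<epsilon> / 2)"
    using num den c m by (intro frac_le) auto
  also have "\<dots> = 8 / c * real m powr (- \<epsilon> / 3)"
    using c m by (simp add: field_simps)
  finally show "real K ^ 2 / (b * real (m - K)) \<le> 8 / c * real m powr (- \<epsilon> / 3)" .
qed

lemma star_first_recovery_powr_bound:
  fixes b c \<epsilon> :: real and m :: nat
  assumes c: "c > 0" and "0 < \<epsilon>" "\<epsilon> < 1" "real m \<ge> 1"
    and b: "b \<ge> c * real m powr (\<epsilon> - 1)" and "real m powr (1/3) + 1 \<le> real m / 2"
  shows "measure_pmf.prob (star_first_recovery m b) {k. real k \<ge> real m powr (\<epsilon> / 3)}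
           \<ge> 1 - 8 / c * real m powr (- \<epsilon> / 3)"
proof -
  define K where "K = nat \<lceil>real m powr (\<epsilon> / 3)\<rceil>"
  have "b > 0" using b c \<open>real m \<ge> 1\<close> by (smt (verit) mult_pos_pos powr_gt_zero)
  have "1 - 8 / c * real m powr (- \<epsilon> / 3) \<le> 1 - real K ^ 2 / (b * real (m - K))"
    using ceiling_powr_square_ratio_le(2)[OF assms] unfolding K_def by (rule diff_left_mono)
  also have "\<dots> \<le> measure_pmf.prob (star_first_recovery m b) {k. K \<le> k}"
    using star_first_recovery_ge[OF \<open>b > 0\<close> ceiling_powr_square_ratio_le(1)[OF assms]]
    unfolding K_def .
  also have "\<dots> \<le> measure_pmf.prob (star_first_recovery m b) {k. real k \<ge> real m powr (\<epsilon> / 3)}"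
    unfolding K_def by (intro measure_pmf.finite_measure_mono) (auto dest: order_trans[OF real_nat_ceiling_ge])
  finally show ?thesis .
qed

theorem lemma5:
  fixes \<beta> :: "nat \<Rightarrow> real" and \<epsilon> :: real
  assumes "0 < \<epsilon>" and "\<epsilon> < 1"
    and "\<exists>c>0. \<forall>\<^sub>F m in sequentially. \<beta> m \<ge> c * real m powr (\<epsilon> - 1)"
  shows "\<exists>C1>0. \<exists>C2>0. \<forall>\<^sub>F m in sequentially.
           measure_pmf.prob (star_first_recovery m (\<beta> m))
             {k. real k \<ge> C1 * real m powr (\<epsilon> / 3)}
           \<ge> 1 - C2 * real m powr (- \<epsilon> / 3)"
proof -
  obtain c where c: "c > 0" and \<beta>: "\<forall>\<^sub>F m in sequentially. \<beta> m \<ge> c * real m powr (\<epsilon> - 1)"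
    using assms(3) by blast
  have "\<forall>\<^sub>F m in sequentially. real m \<ge> 1"
    by (rule eventually_sequentiallyI[of 1]) simp
  moreover have "\<forall>\<^sub>F m in sequentially. real m powr (1/3) + 1 \<le> real m / 2"
    by real_asymp
  ultimately have "\<forall>\<^sub>F m in sequentially.
      measure_pmf.prob (star_first_recovery m (\<beta> m)) {k. real k \<ge> real m powr (\<epsilon> / 3)}
        \<ge> 1 - 8 / c * real m powr (- \<epsilon> / 3)"
    using \<beta> by eventually_elim (rule star_first_recovery_powr_bound[OF c assms(1,2)])
  then show ?thesis using c by (intro exI[of _ 1] exI[of _ "8 / c"] conjI) auto
qed

end
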